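(* Let $w\in W^*(d,2m;\vec 0)$. Then $\Phi(\phi(w))$ and $w$ have the same sequence of positive steps if and only if $\Phi(\phi(w))=w$.
   Context: $n,r,d\ge1$, $m=rn$. $U=\{u_1\prec\cdots\prec u_n\}$, $V=\{v_1\prec\cdots\prec v_n\}$; $\overline U=U\times[r]$, $\overline V=V\times[r]$ ordered lexicographically (write $u^s$ for $(u,s)$). An $r$-configuration is a bijection between $\overline U$ and $\overline V$; a quasi configuration is a partial matching. Pairs $(\bar u,\bar v),(\bar u',\bar v')$ are noncrossing if ($\bar u\prec\bar u'$ and $\bar v\prec\bar v'$) or ($\bar u'\prec\bar u$ and $\bar v'\prec\bar v$). $W^*(d,2m;\vec0)$: walks $w=a_{u_1^1}\cdots a_{u_n^r}|b_{v_1^1}\cdots b_{v_n^r}$, $a_{\bar u},b_{\bar v}\in[d]$, in $\mathbb Z^d$ from the origin with steps $e_{a_{\bar u}}$ ($\bar u$ increasing) then $-e_{b_{\bar v}}$ ($\bar v$ increasing), ending at the origin; the positive steps are $a_{u_1^1}\cdots a_{u_n^r}$. For an $r$-configuration $F$: $a_{\bar u}$ is the maximum size of a set of pairwise noncrossing pairs of $F$ containing the pair $(\bar u,\bar v')\in F$, all of whose pairs $(x,y)$ satisfy $x\preceq\bar u$, $y\preceq\bar v'$; $b_{\bar v}$ symmetrically; $\Phi(F)=a_{u_1^1}\cdots a_{u_n^r}|b_{v_1^1}\cdots b_{v_n^r}$. $A_k(w)=\{\bar u:a_{\bar u}=k\}$, $B_k(w)=\{\bar v:b_{\bar v}=k\}$;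 connecting equal-size ordered sets $A,B$ in a crossing way: pair the $i$-th smallest of $A$ with the $i$-th largest of $B$; $\phi(w)$: for each $k$, if $|A_k(w)|\ge|B_k(w)|$ connect the $|B_k(w)|$ smallest elements of $A_k(w)$ with $B_k(w)$ in a crossing way, else connect $A_k(w)$ with the $|A_k(w)|$ largest elements of $B_k(w)$ in a crossing way. (For $w$ ending at the origin, $\phi(w)$ is an $r$-configuration, so $\Phi(\phi(w))$ is defined.) *)

theory Defs
  imports Main "HOL-Library.Product_Lexorder"
begin

(* Elements of \<overline>U (resp. \<overline>V) are pairs (i,s) standing for u_i^s (resp. v_i^s),
   with i \<in> {1..n}, s \<in> {1..r}; the order on nat \<times> nat is lexicographic
   (HOL-Library.Product_Lexorder). *)
definition Ubar :: "nat \<Rightarrow> nat \<Rightarrow> (nat \<times> nat) set" where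
  "Ubar n r = {1..n} \<times> {1..r}"

type_synonym elt = "nat \<times> nat"
type_synonym pair = "elt \<times> elt"

(* A walk a|b in W^*(d,2m;0): positive step labels a on Ubar, negative labels b on Vbar
   (Vbar = Ubar as index set). *)
definition walk_end :: "nat \<Rightarrow> nat \<Rightarrow> (elt \<Rightarrow> nat) \<Rightarrow> (elt \<Rightarrow> nat) \<Rightarrow> nat \<Rightarrow> int" where
  "walk_end n r a b k = int (card {u \<in> Ubar n r. a u = k}) - int (card {v \<in> Ubar n r. b v = k})"

definition in_W :: "nat \<Rightarrow> nat \<Rightarrow> nat \<Rightarrow> (elt \<Rightarrow> nat) \<Rightarrow> (elt \<Rightarrow> nat) \<Rightarrow> bool" where
  "in_W d n r a b \<longleftrightarrow>
     (\<forall>u \<in> Ubar n r. a u \<in> {1..d}) \<and> (\<forall>v \<in> Ubar n r. b v \<in> {1..d}) \<and>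
     (\<forall>k. walk_end n r a b k = 0)"

definition A_set :: "nat \<Rightarrow> nat \<Rightarrow> (elt \<Rightarrow> nat) \<Rightarrow> nat \<Rightarrow> elt set" where
  "A_set n r a k = {u \<in> Ubar n r. a u = k}"

definition B_set :: "nat \<Rightarrow> nat \<Rightarrow> (elt \<Rightarrow> nat) \<Rightarrow> nat \<Rightarrow> elt set" where
  "B_set n r b k = {v \<in> Ubar n r. b v = k}"

(* phi(w): for each k, with p = min |A_k| |B_k|, pair the i-th smallest of the first p
   elements of A_k with the i-th largest of the last p elements of B_k
   (this covers both cases |A_k| >= |B_k| and |A_k| < |B_k| of the definition). *)
definition phi :: "nat \<Rightarrow> nat \<Rightarrow> (elt \<Rightarrow> nat) \<Rightarrow> (elt \<Rightarrow> nat) \<Rightarrow> pair set" where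
  "phi n r a b = {(x, y). \<exists>k. x \<in> A_set n r a k \<and> y \<in> B_set n r b k \<and>
      (let p = min (card (A_set n r a k)) (card (B_set n r b k));
           i = card {x' \<in> A_set n r a k. x' < x};
           j = card {y' \<in> B_set n r b k. y < y'}
       in i < p \<and> j < p \<and> i = j)}"

definition noncrossing :: "pair \<Rightarrow> pair \<Rightarrow> bool" where
  "noncrossing p q \<longleftrightarrow>
     (fst p < fst q \<and> snd p < snd q) \<or> (fst q < fst p \<and> snd q < snd p)"

definition pw_noncrossing :: "pair set \<Rightarrow> bool" where
  "pw_noncrossing S \<longleftrightarrow> (\<forall>p \<in> S. \<forall>q \<in> S. p \<noteq> q \<longrightarrow> noncrossing p q)"

definition Phi_a :: "pair set \<Rightarrow> elt \<Rightarrow> nat" where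
  "Phi_a F u = Max {card S | S v'. (u, v') \<in> F \<and> S \<subseteq> F \<and> (u, v') \<in> S \<and> pw_noncrossing S \<and>
                      (\<forall>(x, y) \<in> S. x \<le> u \<and> y \<le> v')}"

definition Phi_b :: "pair set \<Rightarrow> elt \<Rightarrow> nat" where
  "Phi_b F v = Max {card S | S u'. (u', v) \<in> F \<and> S \<subseteq> F \<and> (u', v) \<in> S \<and> pw_noncrossing S \<and>
                      (\<forall>(x, y) \<in> S. x \<le> u' \<and> y \<le> v)}"

end

theory Submission
  imports Defs
begin

(* phi(w) joins positions carrying the same label and is injective in both coordinates (ranks
   inside a finite chain are distinct), and since w ends at the origin it matches every negative
   step. For such a matching F and (u, v) \<in> F, the families of noncrossing sets maximised in
   Phi_a F u and in Phi_b F v are the same, so Phi_b(v) = Phi_a(u) = a_u = b_v: agreement on the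
   positive steps forces agreement on the negative ones. *)

lemma card_less_strict_mono:
  fixes A :: "'a::linorder set"
  assumes "finite A" "x \<in> A" "x < y"
  shows "card {x'\<in>A. x' < x} < card {x'\<in>A. x' < y}"
proof (rule psubset_card_mono)
  show "{x'\<in>A. x' < x} \<subset> {x'\<in>A. x' < y}"
    using assms(2,3) by auto
qed (use assms(1) in simp)

lemma card_greater_strict_antimono:
  fixes A :: "'a::linorder set"
  assumes "finite A" "y \<in> A" "x < y"
  shows "card {x'\<in>A. y < x'} < card {x'\<in>A. x < x'}"
proof (rule psubset_card_mono)
  show "{x'\<in>A. y < x'} \<subset> {x'\<in>A. x < x'}"
    using assms(2,3) by auto
qed (use assms(1) in simp)

lemma inj_on_card_less:
  fixes A :: "'a::linorder set"
  assumes "finite A"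
  shows "inj_on (\<lambda>x. card {x'\<in>A. x' < x}) A"
  by (rule linorder_inj_onI') (use card_less_strict_mono[OF assms] in fastforce)

lemma inj_on_card_greater:
  fixes A :: "'a::linorder set"
  assumes "finite A"
  shows "inj_on (\<lambda>x. card {x'\<in>A. x < x'}) A"
  by (rule linorder_inj_onI') (use card_greater_strict_antimono[OF assms] in fastforce)

lemma card_less_less_card:
  fixes A :: "'a::linorder set"
  assumes "finite A" "x \<in> A"
  shows "card {x'\<in>A. x' < x} < card A"
proof (rule psubset_card_mono[OF assms(1)])
  show "{x'\<in>A. x' < x} \<subset> A"
    using assms(2) by auto
qed

lemma card_greater_less_card:
  fixes A :: "'a::linorder set"
  assumes "finite A" "x \<in> A"
  shows "card {x'\<in>A. x < x'} < card A"
proof (rule psubset_card_mono[OF assms(1)])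
  show "{x'\<in>A. x < x'} \<subset> A"
    using assms(2) by auto
qed

lemma image_card_less:
  fixes A :: "'a::linorder set"
  assumes "finite A"
  shows "(\<lambda>x. card {x'\<in>A. x' < x}) ` A = {..<card A}"
proof (rule card_subset_eq)
  show "(\<lambda>x. card {x'\<in>A. x' < x}) ` A \<subseteq> {..<card A}"
    using card_less_less_card[OF assms] by auto
  show "card ((\<lambda>x. card {x'\<in>A. x' < x}) ` A) = card {..<card A}"
    using card_image[OF inj_on_card_less[OF assms]] by simp
qed simp

lemma phi_memD:
  assumes "(x, y) \<in> phi n r a b"
  shows "x \<in> A_set n r a (b y)" "y \<in> B_set n r b (b y)"
    "card {x' \<in> A_set n r a (b y). x' < x} = card {y' \<in> B_set n r b (b y). y < y'}"
proof -
  from assms obtain k where "x \<in> A_set n r a k" "y \<in> B_set n r b k"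
    "card {x' \<in> A_set n r a k. x' < x} = card {y' \<in> B_set n r b k. y < y'}"
    unfolding phi_def Let_def by blast
  moreover from \<open>y \<in> B_set n r b k\<close> have "k = b y"
    unfolding B_set_def by simp
  ultimately show "x \<in> A_set n r a (b y)" "y \<in> B_set n r b (b y)"
    "card {x' \<in> A_set n r a (b y). x' < x} = card {y' \<in> B_set n r b (b y). y < y'}"
    by simp_all
qed

lemma finite_A_set: "finite (A_set n r a k)"
  unfolding A_set_def Ubar_def by simp

lemma finite_B_set: "finite (B_set n r b k)"
  unfolding B_set_def Ubar_def by simp

lemma inj_on_snd_phi: "inj_on snd (phi n r a b)"
proof (rule inj_onI, clarify)
  fix x y x' y'
  assume xy: "(x, y) \<in> phi n r a b" and xy': "(x', y') \<in> phi n r a b" and "snd (x, y) = snd (x', y')"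
  then have "y' = y" by simp
  with phi_memD[OF xy] phi_memD[OF xy'] have "x = x'"
    by (intro inj_onD[OF inj_on_card_less[OF finite_A_set[of n r a "b y"]]]) simp_all
  with \<open>y' = y\<close> show "x = x' \<and> y = y'" by simp
qed

lemma inj_on_fst_phi: "inj_on fst (phi n r a b)"
proof (rule inj_onI, clarify)
  fix x y x' y'
  assume xy: "(x, y) \<in> phi n r a b" and xy': "(x', y') \<in> phi n r a b" and "fst (x, y) = fst (x', y')"
  then have "x' = x" by simp
  have "b y' = b y"
    using phi_memD(1)[OF xy] phi_memD(1)[OF xy'] \<open>x' = x\<close> unfolding A_set_def by simp
  with phi_memD[OF xy] phi_memD[OF xy'] \<open>x' = x\<close> have "y = y'"
    by (intro inj_onD[OF inj_on_card_greater[OF finite_B_set[of n r b "b y"]]]) simp_all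
  with \<open>x' = x\<close> show "x = x' \<and> y = y'" by simp
qed

lemma in_W_card_A_set_eq_card_B_set:
  assumes "in_W d n r a b"
  shows "card (A_set n r a k) = card (B_set n r b k)"
proof -
  have "walk_end n r a b k = 0"
    using assms unfolding in_W_def by blast
  then show ?thesis
    unfolding walk_end_def A_set_def B_set_def by simp
qed

lemma phi_matches_V:
  assumes "v \<in> Ubar n r" and "card (B_set n r b (b v)) \<le> card (A_set n r a (b v))"
  shows "\<exists>u. (u, v) \<in> phi n r a b"
proof -
  let ?A = "A_set n r a (b v)" and ?B = "B_set n r b (b v)"
  have v: "v \<in> ?B"
    using assms(1) unfolding B_set_def by simp
  have j: "card {y' \<in> ?B. v < y'} < card ?B"
    by (rule card_greater_less_card[OF finite_B_set v])
  then have "card {y' \<in> ?B. v < y'} \<in> (\<lambda>x. card {x' \<in> ?A. x' < x}) ` ?A"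
    unfolding image_card_less[OF finite_A_set] using assms(2) by simp
  then obtain u where u: "u \<in> ?A" "card {y' \<in> ?B. v < y'} = card {x' \<in> ?A. x' < u}"
    by (rule imageE)
  have "(u, v) \<in> phi n r a b"
    unfolding phi_def Let_def mem_Collect_eq prod.case
    using u v j assms(2) by (intro exI[of _ "b v"]) simp
  then show ?thesis ..
qed

lemma Phi_a_eq_Phi_b_matching:
  assumes "(u, v) \<in> F" "inj_on fst F" "inj_on snd F"
  shows "Phi_a F u = Phi_b F v"
proof -
  have "(u, v') \<in> F \<longleftrightarrow> v' = v" for v'
    using assms inj_onD[OF assms(2), of "(u, v')" "(u, v)"] by auto
  moreover have "(u', v) \<in> F \<longleftrightarrow> u' = u" for u'
    using assms inj_onD[OF assms(3), of "(u', v)" "(u, v)"] by auto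
  ultimately show ?thesis
    unfolding Phi_a_def Phi_b_def by simp
qed

theorem lemma7:
  fixes n r d :: nat and a b :: "nat \<times> nat \<Rightarrow> nat"
  assumes "n \<ge> 1" and "r \<ge> 1" and "d \<ge> 1"
    and "in_W d n r a b"
  shows "(\<forall>u \<in> Ubar n r. Phi_a (phi n r a b) u = a u) \<longleftrightarrow>
         ((\<forall>u \<in> Ubar n r. Phi_a (phi n r a b) u = a u) \<and>
          (\<forall>v \<in> Ubar n r. Phi_b (phi n r a b) v = b v))"
proof -
  have "Phi_b (phi n r a b) v = b v"
    if Phi_a: "\<forall>u \<in> Ubar n r. Phi_a (phi n r a b) u = a u" and v: "v \<in> Ubar n r" for v
  proof -
    have "card (B_set n r b (b v)) \<le> card (A_set n r a (b v))"
      using in_W_card_A_set_eq_card_B_set[OF assms(4)] by simp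
    then obtain u where uv: "(u, v) \<in> phi n r a b"
      using phi_matches_V[OF v] by blast
    have u: "u \<in> Ubar n r" "a u = b v"
      using phi_memD(1)[OF uv] unfolding A_set_def by simp_all
    have "Phi_b (phi n r a b) v = Phi_a (phi n r a b) u"
      using Phi_a_eq_Phi_b_matching[OF uv inj_on_fst_phi inj_on_snd_phi] by simp
    also have "\<dots> = b v"
      using Phi_a u by simp
    finally show ?thesis .
  qed
  then show ?thesis by blast
qed

end
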